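(* Let $G$ be a second countable locally compact abelian group, $\Lambda\subset G$ a uniform lattice, $\widehat G$ the dual group of $G$, and $\Gamma\subset\widehat G$ the annihilator of $\Lambda$. Let $\Omega\subset\widehat G$ be a measurable set of positive, finite Haar measure and let $\ell$ be a positive integer. If for some $a_1,\dots,a_\ell\in G$ the collection $E_\Lambda(a_1,\dots,a_\ell)=\{e_{a_j+\lambda}: j=1,\dots,\ell,\ \lambda\in\Lambda\}$ (restricted to $\Omega$) is a frame for $L^2(\Omega)$, then $(\Omega,\Gamma)$ is an $m$-subtiling pair of $\widehat G$ for some positive integer $m\le \ell$.
   Context: A uniform lattice is a discrete, co-compact subgroup. The annihilator of $\Lambda$ is $\Gamma=\{\gamma\in\widehat G: e_\lambda(\gamma)=1\ \forall\lambda\in\Lambda\}$, where for $g\in G$ and a character $\omega\in\widehat G$ we write $e_g(\omega)=\omega(g)$. For a lattice $\Gamma\subset\widehat G$ and $\omega\in\widehat G$, set $F_{\Omega,\Gamma}(\omega)=\sum_{\gamma\in\Gamma}\chi_\Omega(\omega+\gamma)$. The pair $(\Omega,\Gamma)$ is an $m$-subtiling pair (sub-multitiling pair) of $\widehat G$ if $\operatorname{ess\,sup}_{\omega\in\widehat G}F_{\Omega,\Gamma}(\omega)=m$. A family $\{\phi_j\}_{j\in J}$ in a Hilbert space $\mathbb H$ is a frame if there are $0<A\le B<\infty$ with $A\|f\|^2\le\sum_j|\langle f,\phi_j\rangle|^2\le B\|f\|^2$ for all $f\in\mathbb H$. *)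

theory Defs
  imports "HOL-Analysis.Analysis" "HOL-Probability.Essential_Supremum"
begin

text \<open>Second countable locally compact (Hausdorff) abelian topological group: the type class
  part is imposed on the type, local compactness is stated with the library notion.\<close>

definition lca_group :: "'a::{topological_ab_group_add, t2_space, second_countable_topology} itself \<Rightarrow> bool" where
  "lca_group _ \<longleftrightarrow> locally_compact_space (euclidean :: 'a topology)"

definition is_character :: "('a::{topological_ab_group_add} \<Rightarrow> complex) \<Rightarrow> bool" where
  "is_character \<psi> \<longleftrightarrow> continuous_on UNIV \<psi> \<and> (\<forall>a. cmod (\<psi> a) = 1)
      \<and> (\<forall>a b. \<psi> (a + b) = \<psi> a * \<psi> b)"

text \<open>The pairing e :: G => Ghat => complex, e g w = w(g), exhibits the topological group
  Ghat as the dual group of G: every element of Ghat is a continuous character, the group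
  operation is pointwise multiplication, every continuous character arises from exactly one
  element of Ghat, and the topology of Ghat is the compact-open topology (uniform convergence
  on compact sets).\<close>

definition is_dual_pairing ::
  "('a::topological_ab_group_add \<Rightarrow> 'b::topological_ab_group_add \<Rightarrow> complex) \<Rightarrow> bool" where
  "is_dual_pairing e \<longleftrightarrow>
     (\<forall>w. is_character (\<lambda>g. e g w)) \<and>
     (\<forall>g w v. e g (w + v) = e g w * e g v) \<and>
     (\<forall>\<psi>. is_character \<psi> \<longrightarrow> (\<exists>!w. \<psi> = (\<lambda>g. e g w))) \<and>
     (\<forall>U :: 'b set. open U \<longleftrightarrow>
        (\<forall>w0\<in>U. \<exists>K \<epsilon>. compact K \<and> \<epsilon> > 0 \<and>
            {w. \<forall>g\<in>K. cmod (e g w - e g w0) < \<epsilon>} \<subseteq> U))"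

text \<open>Haar measure on a second countable LCA group (regularity is automatic for locally finite
  Borel measures on second countable locally compact Hausdorff spaces).\<close>

definition is_haar_measure :: "'b::topological_ab_group_add measure \<Rightarrow> bool" where
  "is_haar_measure \<mu> \<longleftrightarrow> sets \<mu> = sets borel \<and> emeasure \<mu> UNIV \<noteq> 0 \<and>
     (\<forall>K. compact K \<longrightarrow> emeasure \<mu> K < \<infinity>) \<and>
     (\<forall>A\<in>sets borel. \<forall>x. emeasure \<mu> ((\<lambda>y. x + y) ` A) = emeasure \<mu> A)"

definition uniform_lattice :: "'a::topological_ab_group_add set \<Rightarrow> bool" where
  "uniform_lattice \<Lambda> \<longleftrightarrow>
     0 \<in> \<Lambda> \<and> (\<forall>x\<in>\<Lambda>. \<forall>y\<in>\<Lambda>. x - y \<in> \<Lambda>) \<and>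
     (\<forall>x\<in>\<Lambda>. \<exists>U. open U \<and> U \<inter> \<Lambda> = {x}) \<and>
     (\<exists>K. compact K \<and> {k + l | k l. k \<in> K \<and> l \<in> \<Lambda>} = UNIV)"

definition annihilator ::
  "('a \<Rightarrow> 'b \<Rightarrow> complex) \<Rightarrow> 'a set \<Rightarrow> 'b set" where
  "annihilator e \<Lambda> = {\<gamma>. \<forall>l\<in>\<Lambda>. e l \<gamma> = 1}"

definition F_count :: "'b::plus set \<Rightarrow> 'b set \<Rightarrow> 'b \<Rightarrow> ennreal" where
  "F_count \<Omega> \<Gamma> w = (\<integral>\<^sup>+ \<gamma>. indicator \<Omega> (w + \<gamma>) \<partial>count_space \<Gamma>)"

definition subtiling_pair :: "'b::plus measure \<Rightarrow> nat \<Rightarrow> 'b set \<Rightarrow> 'b set \<Rightarrow> bool" where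
  "subtiling_pair \<mu> m \<Omega> \<Gamma> \<longleftrightarrow> esssup \<mu> (F_count \<Omega> \<Gamma>) = of_nat m"

definition L2_normsq :: "'b measure \<Rightarrow> 'b set \<Rightarrow> ('b \<Rightarrow> complex) \<Rightarrow> ennreal" where
  "L2_normsq \<mu> \<Omega> f = (\<integral>\<^sup>+ w\<in>\<Omega>. ennreal ((cmod (f w))\<^sup>2) \<partial>\<mu>)"

definition in_L2 :: "'b measure \<Rightarrow> 'b set \<Rightarrow> ('b \<Rightarrow> complex) \<Rightarrow> bool" where
  "in_L2 \<mu> \<Omega> f \<longleftrightarrow> f \<in> borel_measurable \<mu> \<and> L2_normsq \<mu> \<Omega> f < \<infinity>"

definition L2_inner :: "'b measure \<Rightarrow> 'b set \<Rightarrow> ('b \<Rightarrow> complex) \<Rightarrow> ('b \<Rightarrow> complex) \<Rightarrow> complex" where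
  "L2_inner \<mu> \<Omega> f h = (LINT w:\<Omega>|\<mu>. f w * cnj (h w))"

definition is_frame_L2 :: "'b measure \<Rightarrow> 'b set \<Rightarrow> 'j set \<Rightarrow> ('j \<Rightarrow> 'b \<Rightarrow> complex) \<Rightarrow> bool" where
  "is_frame_L2 \<mu> \<Omega> J \<phi> \<longleftrightarrow>
     (\<exists>A B::real. 0 < A \<and> A \<le> B \<and>
        (\<forall>f. in_L2 \<mu> \<Omega> f \<longrightarrow>
           ennreal A * L2_normsq \<mu> \<Omega> f
             \<le> (\<integral>\<^sup>+ j. ennreal ((cmod (L2_inner \<mu> \<Omega> f (\<phi> j)))\<^sup>2) \<partial>count_space J) \<and>
           (\<integral>\<^sup>+ j. ennreal ((cmod (L2_inner \<mu> \<Omega> f (\<phi> j)))\<^sup>2) \<partial>count_space J)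
             \<le> ennreal B * L2_normsq \<mu> \<Omega> f))"

end

theory Submission
  imports Defs
begin

text \<open>Let \<open>F = F_count \<Omega> \<Gamma>\<close>. If \<open>F w > L\<close>, there are distinct \<open>\<gamma> 0, \<dots>, \<gamma> L \<in> \<Gamma>\<close> with
  \<open>w + \<gamma> k \<in> \<Omega>\<close>, and the \<open>L\<close> vectors \<open>(e (a j) (w + \<gamma> k))\<^sub>k\<close> in \<open>\<complex>\<^sup>L\<^sup>+\<^sup>1\<close> are all annihilated
  by a nonzero \<open>q\<close>, which up to an error \<open>\<eta>\<close> can be taken from a countable dense set.
  Let \<open>E\<close> be the set of points of a small neighbourhood where this happens for fixed \<open>\<gamma>\<close> and
  \<open>q\<close>; as \<open>\<Gamma>\<close> is discrete, the translates \<open>E + \<gamma> k\<close> are disjoint. Since \<open>e l (\<gamma> k) = 1\<close> for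
  \<open>l \<in> \<Lambda>\<close>, the function \<open>f = \<Sum>\<^sub>k q k \<cdot> \<chi>(E + \<gamma> k)\<close> has the same frame coefficients against
  \<open>e (a j + l)\<close> as a function \<open>g j\<close> supported on \<open>E + \<gamma> k0\<close> and bounded by \<open>\<eta>\<close>. The lower
  frame bound for \<open>f\<close> and the upper one for the \<open>g j\<close> give \<open>A \<mu>(E) / 4 \<le> L B \<eta>\<^sup>2 \<mu>(E)\<close>, so
  \<open>E\<close> is null. A discrete subgroup of a second countable group is countable, so countably many
  such null sets cover \<open>{F > L}\<close>. Hence \<open>F \<le> L\<close> almost everywhere, and since \<open>F\<close> is integer
  valued and \<open>F \<ge> 1\<close> on \<open>\<Omega>\<close>, its essential supremum is an integer in \<open>[1, L]\<close>.\<close>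

lemma underdetermined_system_nontrivial_solution:
  fixes v :: "nat \<Rightarrow> nat \<Rightarrow> complex"
  assumes "m < n"
  shows "\<exists>c. (\<exists>k<n. c k \<noteq> 0) \<and> (\<forall>j<m. (\<Sum>k<n. c k * v j k) = 0)"
  using assms
proof (induction n arbitrary: m v)
  case 0
  then show ?case by simp
next
  case (Suc n)
  show ?case
  proof (cases "\<forall>j<m. v j 0 = 0")
    case True
    define c :: "nat \<Rightarrow> complex" where "c k = (if k = 0 then 1 else 0)" for k
    have "(\<Sum>k<Suc n. c k * v j k) = v j 0" for j
      by (simp only: sum.lessThan_Suc_shift) (simp add: c_def)
    with True show ?thesis by (intro exI[of _ c]) (auto simp: c_def)
  next
    case False
    then obtain j0 where j0: "j0 < m" "v j0 0 \<noteq> 0" by auto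
    \<comment> \<open>Gaussian elimination: remove the equation j0 and the unknown 0.\<close>
    define \<sigma> where "\<sigma> j = (if j < j0 then j else Suc j)" for j
    define w where "w j k = v (\<sigma> j) (Suc k) - (v (\<sigma> j) 0 / v j0 0) * v j0 (Suc k)" for j k
    from Suc.prems j0 have "m - 1 < n" by linarith
    from Suc.IH[OF this, of w] obtain c' where c': "\<exists>k<n. c' k \<noteq> 0"
      "\<forall>j<m-1. (\<Sum>k<n. c' k * w j k) = 0" by blast
    define S where "S = (\<Sum>k<n. c' k * v j0 (Suc k))"
    define c where "c k = (if k = 0 then - S / v j0 0 else c' (k - 1))" for k
    have sum_c: "(\<Sum>k<Suc n. c k * u k) = c 0 * u 0 + (\<Sum>k<n. c' k * u (Suc k))" for u
      unfolding sum.lessThan_Suc_shift by (simp add: c_def)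
    have "(\<Sum>k<Suc n. c k * v j k) = 0" if "j < m" for j
    proof (cases "j = j0")
      case True
      with j0 show ?thesis by (simp only: sum_c) (simp add: c_def S_def)
    next
      case False
      define j' where "j' = (if j < j0 then j else j - 1)"
      have j': "\<sigma> j' = j" "j' < m - 1" using False that j0 by (auto simp: \<sigma>_def j'_def)
      have "(\<Sum>k<n. c' k * v j (Suc k)) = (\<Sum>k<n. c' k * w j' k) + (v j 0 / v j0 0) * S"
        unfolding w_def S_def j'(1)
        by (simp add: algebra_simps sum.distrib sum_distrib_left sum_subtractf)
      with c'(2) j'(2) j0 show ?thesis by (simp only: sum_c) (simp add: c_def field_simps)
    qed
    moreover from c'(1) obtain k where "k < n" "c' k \<noteq> 0" by blast
    then have "\<exists>k<Suc n. c k \<noteq> 0" by (intro exI[of _ "Suc k"]) (simp add: c_def)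
    ultimately show ?thesis by blast
  qed
qed

lemma unimodular_eq_1_if_squares_near_1:
  fixes z :: complex
  assumes norm_z: "cmod z = 1" and near: "\<And>n. cmod (z ^ (2 ^ n) - 1) < 1"
  shows "z = 1"
proof -
  have Re_sq: "(Re w)\<^sup>2 + (Im w)\<^sup>2 = 1" if "cmod w = 1" for w :: complex
    using that by (metis cmod_power2 one_power2)
  have Re_gt: "Re w > 1/2" if "cmod w = 1" "cmod (w - 1) < 1" for w :: complex
  proof -
    have "(cmod (w - 1))\<^sup>2 < 1" using that(2) by (simp add: power_less_one_iff)
    then have "(Re w - 1)\<^sup>2 + (Im w)\<^sup>2 < 1" by (simp add: cmod_power2)
    with Re_sq[OF that(1)] show ?thesis by (auto simp: power2_eq_square algebra_simps)
  qed
  have norm_pow: "cmod (z ^ (2 ^ n)) = 1" for n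
    by (simp add: norm_power norm_z)
  have Re_le: "Re w \<le> 1" if "cmod w = 1" for w :: complex
    using complex_Re_le_cmod[of w] that by simp
  \<comment> \<open>Squaring triples the distance of the real part from 1 as long as it stays above 1/2.\<close>
  have growth: "3 ^ n * (1 - Re z) \<le> 1 - Re (z ^ (2 ^ n))" for n
  proof (induction n)
    case (Suc n)
    define t where "t = Re (z ^ (2 ^ n))"
    have t: "1/2 < t" "t \<le> 1"
      unfolding t_def using Re_gt[OF norm_pow near] Re_le[OF norm_pow] by auto
    have "z ^ (2 ^ Suc n) = (z ^ (2 ^ n))\<^sup>2"
      by (simp add: power_mult[symmetric] mult.commute)
    then have "1 - Re (z ^ (2 ^ Suc n)) = 2 * (1 - t) * (1 + t)"
      using Re_sq[OF norm_pow, of n] by (simp add: t_def power2_eq_square algebra_simps)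
    moreover have "0 \<le> (1 - t) * (2 * t - 1)" using t by simp
    then have "3 * (1 - t) \<le> 2 * (1 - t) * (1 + t)" by (simp add: algebra_simps)
    ultimately show ?case using Suc by (simp add: t_def)
  qed simp
  have "Re z = 1"
  proof (rule ccontr)
    assume "Re z \<noteq> 1"
    with Re_le[OF norm_z] have pos: "0 < 1 - Re z" by simp
    obtain n :: nat where n: "1 / (1 - Re z) < real n" using reals_Archimedean2 by blast
    have "real n \<le> 3 ^ n"
      using of_nat_less_two_power[of n, where 'a=real] power_mono[of "2::real" 3 n] by linarith
    have "1 < real n * (1 - Re z)" using n pos by (simp add: divide_less_eq)
    also have "\<dots> \<le> 3 ^ n * (1 - Re z)" using \<open>real n \<le> 3 ^ n\<close> pos by simp
    finally have "1 < 3 ^ n * (1 - Re z)" .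
    with growth[of n] Re_gt[OF norm_pow near, of n] show False by simp
  qed
  with Re_sq[OF norm_z] show ?thesis by (simp add: complex_eq_iff)
qed

lemma exists_pos_mult_square_less:
  fixes c d :: real
  assumes "0 < d"
  obtains \<eta> where "0 < \<eta>" "c * \<eta>\<^sup>2 < d"
proof -
  define \<eta> where "\<eta> = sqrt (d / (2 * (\<bar>c\<bar> + 1)))"
  have "0 < d / (2 * (\<bar>c\<bar> + 1))" using assms by (simp add: abs_add_one_gt_zero)
  then have "0 < \<eta>" and \<eta>_sq: "\<eta>\<^sup>2 = d / (2 * (\<bar>c\<bar> + 1))" by (simp_all add: \<eta>_def)
  have "c * \<eta>\<^sup>2 \<le> (\<bar>c\<bar> + 1) * \<eta>\<^sup>2" by (intro mult_right_mono) auto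
  also have "\<dots> = d / 2" unfolding \<eta>_sq using abs_add_one_gt_zero[of c] by (simp add: field_simps)
  also have "\<dots> < d" using assms by simp
  finally show ?thesis using \<open>0 < \<eta>\<close> by (rule that[rotated])
qed

lemma exists_open_diff_subset:
  fixes U :: "'b::topological_group_add set"
  assumes "open U" "0 \<in> U"
  obtains V where "open V" "0 \<in> V" "\<And>v v'. v \<in> V \<Longrightarrow> v' \<in> V \<Longrightarrow> v' - v \<in> U"
proof -
  have "continuous_on UNIV (\<lambda>p::'b \<times> 'b. fst p - snd p)" by (intro continuous_intros)
  then have "open ((\<lambda>p::'b \<times> 'b. fst p - snd p) -` U)"
    using assms(1) continuous_on_open_vimage[OF open_UNIV] by auto
  moreover have "(0, 0) \<in> (\<lambda>p::'b \<times> 'b. fst p - snd p) -` U" using assms(2) by simp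
  ultimately obtain A B where AB: "open A" "open B" "(0, 0) \<in> A \<times> B"
      "A \<times> B \<subseteq> (\<lambda>p::'b \<times> 'b. fst p - snd p) -` U"
    by (rule open_prod_elim)
  show ?thesis
  proof (rule that[of "A \<inter> B"])
    fix v v' assume "v \<in> A \<inter> B" "v' \<in> A \<inter> B"
    then have "(v', v) \<in> A \<times> B" by blast
    with AB(4) show "v' - v \<in> U" by auto
  qed (use AB in auto)
qed

lemma countable_translates_cover:
  fixes V :: "'b::{topological_group_add, second_countable_topology} set"
  assumes "open V" "0 \<in> V"
  obtains X where "countable X" "\<And>y. \<exists>x\<in>X. y - x \<in> V"
proof -
  define F where "F = range (\<lambda>x. {y. y - x \<in> V})"
  have "open S" if "S \<in> F" for S
  proof -
    obtain x where "S = {y. y - x \<in> V}" using \<open>S \<in> F\<close> F_def by blast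
    moreover have "continuous_on UNIV (\<lambda>y. y - x)" by (intro continuous_intros)
    then have "open ((\<lambda>y. y - x) -` V \<inter> UNIV)"
      using assms(1) continuous_on_open_vimage[OF open_UNIV] by blast
    ultimately show ?thesis by (simp add: vimage_def)
  qed
  then obtain F' where F': "F' \<subseteq> F" "countable F'" "\<Union>F' = \<Union>F" using Lindelof by metis
  define X where "X = (\<lambda>S. SOME x. S = {y. y - x \<in> V}) ` F'"
  show ?thesis
  proof (rule that[of X])
    show "countable X" unfolding X_def using F'(2) by simp
    fix y
    have "y \<in> {z. z - y \<in> V}" using assms(2) by simp
    then have "y \<in> \<Union>F" unfolding F_def by blast
    then obtain S where S: "S \<in> F'" "y \<in> S" using F'(3) by blast
    then have "\<exists>x. S = {y. y - x \<in> V}" using F'(1) F_def by blast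
    then have "S = {y. y - (SOME x. S = {y. y - x \<in> V}) \<in> V}" by (rule someI_ex)
    then show "\<exists>x\<in>X. y - x \<in> V" using S unfolding X_def by blast
  qed
qed

section \<open>The counting function\<close>

lemma F_count_eq_emeasure: "F_count \<Omega> \<Gamma> w = emeasure (count_space \<Gamma>) {\<gamma>\<in>\<Gamma>. w + \<gamma> \<in> \<Omega>}"
proof -
  have "F_count \<Omega> \<Gamma> w = (\<integral>\<^sup>+ \<gamma>. indicator {\<gamma>\<in>\<Gamma>. w + \<gamma> \<in> \<Omega>} \<gamma> \<partial>count_space \<Gamma>)"
    unfolding F_count_def by (rule nn_integral_cong) (auto simp: indicator_def)
  then show ?thesis by simp
qed

lemma F_count_cases: "F_count \<Omega> \<Gamma> w = \<infinity> \<or> (\<exists>k::nat. F_count \<Omega> \<Gamma> w = of_nat k)"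
  unfolding F_count_eq_emeasure by (auto simp: emeasure_count_space)

lemma F_count_ge_1:
  fixes \<Omega> \<Gamma> :: "'b::monoid_add set"
  assumes "0 \<in> \<Gamma>" "w \<in> \<Omega>"
  shows "1 \<le> F_count \<Omega> \<Gamma> w"
proof -
  have "(\<lambda>\<gamma>. indicator \<Omega> (w + \<gamma>) :: ennreal) 0 \<le> F_count \<Omega> \<Gamma> w"
    unfolding F_count_def using assms(1) by (rule nn_integral_ge_point)
  then show ?thesis using assms(2) by simp
qed

lemma F_count_measurable:
  fixes \<Omega> \<Gamma> :: "'b::topological_monoid_add set"
  assumes "countable \<Gamma>" "\<Omega> \<in> sets borel"
  shows "F_count \<Omega> \<Gamma> \<in> borel_measurable borel"
proof -
  have ind: "(\<lambda>w. indicator \<Omega> (w + \<gamma>) :: ennreal) \<in> borel_measurable borel" for \<gamma>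
  proof (rule borel_measurable_indicator')
    have "continuous_on UNIV (\<lambda>w::'b. w + \<gamma>)" by (intro continuous_intros)
    then have "(\<lambda>w::'b. w + \<gamma>) \<in> borel_measurable borel" by (rule borel_measurable_continuous_onI)
    from measurable_sets[OF this assms(2)] show "{w \<in> space borel. w + \<gamma> \<in> \<Omega>} \<in> sets borel"
      by (simp add: vimage_def Collect_conj_eq[symmetric])
  qed
  show ?thesis
  proof (cases "finite \<Gamma>")
    case True
    then have "F_count \<Omega> \<Gamma> = (\<lambda>w. \<Sum>\<gamma>\<in>\<Gamma>. indicator \<Omega> (w + \<gamma>))"
      unfolding F_count_def[abs_def] by (simp add: nn_integral_count_space_finite)
    then show ?thesis by (simp add: borel_measurable_sum ind)
  next
    case False
    note bij = bij_betw_from_nat_into[OF assms(1) False]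
    have "F_count \<Omega> \<Gamma> = (\<lambda>w. \<Sum>n. indicator \<Omega> (w + from_nat_into \<Gamma> n))"
      unfolding F_count_def[abs_def]
      by (simp add: nn_integral_bij_count_space[symmetric, OF bij] nn_integral_count_space_nat)
    then show ?thesis using ind by (simp add: borel_measurable_suminf_order)
  qed
qed

lemma exists_distinct_translates_in:
  assumes "\<not> F_count \<Omega> \<Gamma> w \<le> of_nat n"
  obtains gs where "set gs \<subseteq> \<Gamma>" "distinct gs" "length gs = Suc n" "\<And>k. k < length gs \<Longrightarrow> w + gs ! k \<in> \<Omega>"
proof -
  define S where "S = {\<gamma>\<in>\<Gamma>. w + \<gamma> \<in> \<Omega>}"
  obtain T where T: "finite T" "card T = Suc n" "T \<subseteq> S"
  proof (cases "finite S")
    case True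
    then have "F_count \<Omega> \<Gamma> w = of_nat (card S)"
      by (simp add: F_count_eq_emeasure emeasure_count_space S_def)
    with assms have "Suc n \<le> card S" by simp
    then show ?thesis using that by (metis obtain_subset_with_card_n)
  next
    case False
    then show ?thesis using that infinite_arbitrarily_large by blast
  qed
  obtain gs where "set gs = T" "distinct gs" using finite_distinct_list[OF T(1)] by blast
  moreover from this have "length gs = Suc n" using distinct_card T(2) by fastforce
  ultimately show ?thesis using T(3) by (intro that) (auto simp: S_def)
qed

lemma exists_normalized_kernel_vector:
  fixes v :: "nat \<Rightarrow> nat \<Rightarrow> complex"
  obtains c k0 where "k0 < Suc m" "c k0 = 1" "\<And>j. j < m \<Longrightarrow> (\<Sum>k<Suc m. c k * v j k) = 0"
proof -
  obtain c where "\<exists>k<Suc m. c k \<noteq> 0" and c: "\<forall>j<m. (\<Sum>k<Suc m. c k * v j k) = 0"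
    using underdetermined_system_nontrivial_solution[of m "Suc m" v] by blast
  then obtain k0 where k0: "k0 < Suc m" "c k0 \<noteq> 0" by blast
  show ?thesis
  proof (rule that[of k0 "\<lambda>k. c k / c k0"])
    fix j assume "j < m"
    have "(\<Sum>k<Suc m. c k / c k0 * v j k) = (\<Sum>k<Suc m. c k * v j k) / c k0"
      unfolding sum_divide_distrib by (intro sum.cong refl) (simp add: field_simps)
    with c \<open>j < m\<close> show "(\<Sum>k<Suc m. c k / c k0 * v j k) = 0" by simp
  qed (use k0 in simp_all)
qed

lemma exists_dense_near_kernel:
  fixes v :: "nat \<Rightarrow> nat \<Rightarrow> complex" and D :: "complex set"
  assumes dense: "\<And>X. open X \<Longrightarrow> X \<noteq> {} \<Longrightarrow> \<exists>d\<in>D. d \<in> X"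
    and bounded: "\<And>j k. cmod (v j k) \<le> 1" and "0 < \<eta>"
  obtains qs k0 where "set qs \<subseteq> D" "length qs = Suc m" "k0 < Suc m" "1/2 \<le> cmod (qs ! k0)"
    "\<And>j. j < m \<Longrightarrow> cmod (\<Sum>k<Suc m. qs ! k * v j k) \<le> \<eta>"
proof -
  obtain c' k0 where k0: "k0 < Suc m" "c' k0 = 1" and c': "\<And>j. j < m \<Longrightarrow> (\<Sum>k<Suc m. c' k * v j k) = 0"
    by (rule exists_normalized_kernel_vector[of m v]) blast
  define \<delta> where "\<delta> = min (1/2) (\<eta> / real (Suc m))"
  have "real (Suc m) * \<delta> \<le> real (Suc m) * (\<eta> / real (Suc m))"
    by (intro mult_left_mono) (auto simp: \<delta>_def)
  moreover have "0 < \<delta>" using \<open>0 < \<eta>\<close> by (simp add: \<delta>_def)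
  moreover have "\<delta> \<le> 1/2" unfolding \<delta>_def by (rule min.cobounded1)
  ultimately have \<delta>: "0 < \<delta>" "\<delta> \<le> 1/2" "real (Suc m) * \<delta> \<le> \<eta>" by simp_all
  have "\<forall>k. \<exists>d\<in>D. d \<in> ball (c' k) \<delta>"
    using dense[OF open_ball] \<delta>(1) by (metis centre_in_ball empty_iff)
  then obtain d where d: "\<And>k. d k \<in> D" "\<And>k. cmod (d k - c' k) < \<delta>"
    by (metis dist_commute dist_norm mem_ball)
  define qs where "qs = map d [0..<Suc m]"
  have qs: "k < Suc m \<Longrightarrow> qs ! k = d k" for k
    unfolding qs_def by (simp del: upt_Suc)
  show ?thesis
  proof (rule that[of qs k0])
    show "set qs \<subseteq> D" "length qs = Suc m" using d(1) by (auto simp: qs_def)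
    have "1 = cmod (c' k0)" using k0 by simp
    also have "\<dots> \<le> cmod (d k0) + cmod (d k0 - c' k0)"
      using norm_triangle_ineq4[of "d k0" "d k0 - c' k0"] by simp
    finally show "1/2 \<le> cmod (qs ! k0)" using d(2)[of k0] \<delta>(2) qs[OF k0(1)] by simp
    fix j assume "j < m"
    have "(\<Sum>k<Suc m. qs ! k * v j k) = (\<Sum>k<Suc m. (d k - c' k) * v j k)"
      using c'[OF \<open>j < m\<close>] by (simp add: qs algebra_simps sum_subtractf)
    moreover have "cmod ((d k - c' k) * v j k) \<le> \<delta>" for k
    proof -
      have "cmod (d k - c' k) * cmod (v j k) \<le> \<delta> * 1"
        using d(2)[of k] bounded[of j k] \<delta>(1) by (intro mult_mono) auto
      then show ?thesis by (simp add: norm_mult)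
    qed
    then have "cmod (\<Sum>k<Suc m. (d k - c' k) * v j k) \<le> (\<Sum>k<Suc m. \<delta>)"
      by (intro order_trans[OF norm_sum] sum_mono)
    ultimately have "cmod (\<Sum>k<Suc m. qs ! k * v j k) \<le> real (Suc m) * \<delta>" by simp
    then show "cmod (\<Sum>k<Suc m. qs ! k * v j k) \<le> \<eta>" using \<delta>(3) by simp
  qed (rule k0(1))
qed

lemma one_le_esssup:
  assumes "S \<in> sets M" "0 < emeasure M S" "\<And>w. w \<in> S \<Longrightarrow> 1 \<le> F w"
  shows "1 \<le> esssup M F"
proof (rule ccontr)
  assume "\<not> 1 \<le> esssup M F"
  from esssup_AE[of F M] have "AE w in M. w \<notin> S"
    by eventually_elim (use assms(3) \<open>\<not> 1 \<le> esssup M F\<close> in \<open>metis not_le order_less_le_trans\<close>)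
  then have "emeasure M {w\<in>space M. w \<in> S} = 0" by (rule emeasure_eq_0_AE)
  moreover have "{w\<in>space M. w \<in> S} = S" using sets.sets_into_space[OF assms(1)] by blast
  ultimately show False using assms(2) by simp
qed

lemma esssup_eq_of_nat:
  fixes F :: "'x \<Rightarrow> ennreal"
  assumes F: "F \<in> borel_measurable M" "\<And>w. F w = \<infinity> \<or> (\<exists>k::nat. F w = of_nat k)"
    and AE: "AE w in M. F w \<le> of_nat L"
    and S: "S \<in> sets M" "0 < emeasure M S" "\<And>w. w \<in> S \<Longrightarrow> 1 \<le> F w"
  shows "\<exists>m::nat. 0 < m \<and> m \<le> L \<and> esssup M F = of_nat m"
proof -
  define s where "s = esssup M F"
  have s_AE: "AE w in M. F w \<le> s" unfolding s_def by (rule esssup_AE)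
  have s_le: "s \<le> of_nat L" unfolding s_def using F(1) AE by (rule esssup_I)
  have s_ge: "1 \<le> s" unfolding s_def using S by (rule one_le_esssup)
  \<comment> \<open>\<open>F\<close> is integer valued, so \<open>s\<close> is the largest integer below \<open>s\<close>.\<close>
  define K where "K = {k. k \<le> L \<and> of_nat k \<le> s}"
  define m where "m = Max K"
  have "(1::ennreal) \<le> of_nat L" using s_ge s_le by (rule order_trans)
  then have "1 \<le> L" by (metis of_nat_1 of_nat_le_iff)
  then have K: "finite K" "1 \<in> K" unfolding K_def using s_ge by auto
  then have "m \<in> K" "1 \<le> m" unfolding m_def by (auto intro: Max_in Max_ge)
  have "s \<le> of_nat m"
    unfolding s_def
  proof (rule esssup_I[OF F(1)])
    from s_AE show "AE w in M. F w \<le> of_nat m"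
    proof eventually_elim
      fix w assume w: "F w \<le> s"
      show "F w \<le> of_nat m"
      proof (cases "F w = \<infinity>")
        case True
        with w s_le show ?thesis by (simp add: top_unique)
      next
        case False
        with F(2) obtain k where k: "F w = of_nat k" by blast
        with w have "of_nat k \<le> s" by simp
        moreover from this s_le have "k \<le> L" by (metis of_nat_le_iff order_trans)
        ultimately have "k \<in> K" unfolding K_def by simp
        then have "k \<le> m" unfolding m_def using K(1) by (rule Max_ge[rotated])
        with k show ?thesis by simp
      qed
    qed
  qed
  moreover have "of_nat m \<le> s" "m \<le> L" using \<open>m \<in> K\<close> by (auto simp: K_def)
  ultimately show ?thesis using \<open>1 \<le> m\<close> by (intro exI[of _ m]) (auto simp: s_def)
qed

section \<open>Frame sums\<close>

definition frame_sum :: "'b measure \<Rightarrow> 'b set \<Rightarrow> 'j set \<Rightarrow> ('j \<Rightarrow> 'b \<Rightarrow> complex) \<Rightarrow> ('b \<Rightarrow> complex) \<Rightarrow> ennreal"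
  where "frame_sum \<mu> \<Omega> J \<phi> f = (\<integral>\<^sup>+ j. ennreal ((cmod (L2_inner \<mu> \<Omega> f (\<phi> j)))\<^sup>2) \<partial>count_space J)"

definition frame_bounds :: "'b measure \<Rightarrow> 'b set \<Rightarrow> 'j set \<Rightarrow> ('j \<Rightarrow> 'b \<Rightarrow> complex) \<Rightarrow> real \<Rightarrow> real \<Rightarrow> bool"
  where "frame_bounds \<mu> \<Omega> J \<phi> A B \<longleftrightarrow> (\<forall>f. in_L2 \<mu> \<Omega> f \<longrightarrow>
     ennreal A * L2_normsq \<mu> \<Omega> f \<le> frame_sum \<mu> \<Omega> J \<phi> f \<and> frame_sum \<mu> \<Omega> J \<phi> f \<le> ennreal B * L2_normsq \<mu> \<Omega> f)"

lemma is_frame_L2_iff_frame_bounds: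
  "is_frame_L2 \<mu> \<Omega> J \<phi> \<longleftrightarrow> (\<exists>A B. 0 < A \<and> A \<le> B \<and> frame_bounds \<mu> \<Omega> J \<phi> A B)"
  unfolding is_frame_L2_def frame_bounds_def frame_sum_def ..

lemma frame_sum_le_blockwise:
  assumes "finite I" "frame_bounds \<mu> \<Omega> (I \<times> \<Lambda>) \<phi> A B" "\<And>i. i \<in> I \<Longrightarrow> in_L2 \<mu> \<Omega> (g i)"
    and same: "\<And>i l. i \<in> I \<Longrightarrow> l \<in> \<Lambda> \<Longrightarrow> L2_inner \<mu> \<Omega> f (\<phi> (i, l)) = L2_inner \<mu> \<Omega> (g i) (\<phi> (i, l))"
  shows "frame_sum \<mu> \<Omega> (I \<times> \<Lambda>) \<phi> f \<le> ennreal B * (\<Sum>i\<in>I. L2_normsq \<mu> \<Omega> (g i))"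
proof -
  have "frame_sum \<mu> \<Omega> (I \<times> \<Lambda>) \<phi> f
      \<le> (\<integral>\<^sup>+ p. (\<Sum>i\<in>I. ennreal ((cmod (L2_inner \<mu> \<Omega> (g i) (\<phi> p)))\<^sup>2)) \<partial>count_space (I \<times> \<Lambda>))"
    unfolding frame_sum_def
  proof (rule nn_integral_mono)
    fix p assume "p \<in> space (count_space (I \<times> \<Lambda>))"
    then obtain i l where p: "p = (i, l)" "i \<in> I" "l \<in> \<Lambda>" by auto
    then have "ennreal ((cmod (L2_inner \<mu> \<Omega> f (\<phi> p)))\<^sup>2) = ennreal ((cmod (L2_inner \<mu> \<Omega> (g i) (\<phi> p)))\<^sup>2)"
      by (simp add: same)
    also have "\<dots> \<le> (\<Sum>i\<in>I. ennreal ((cmod (L2_inner \<mu> \<Omega> (g i) (\<phi> p)))\<^sup>2))"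
      using p assms(1) by (intro member_le_sum) auto
    finally show "ennreal ((cmod (L2_inner \<mu> \<Omega> f (\<phi> p)))\<^sup>2)
        \<le> (\<Sum>i\<in>I. ennreal ((cmod (L2_inner \<mu> \<Omega> (g i) (\<phi> p)))\<^sup>2))" .
  qed
  also have "\<dots> = (\<Sum>i\<in>I. frame_sum \<mu> \<Omega> (I \<times> \<Lambda>) \<phi> (g i))"
    unfolding frame_sum_def by (rule nn_integral_sum) simp
  also have "\<dots> \<le> (\<Sum>i\<in>I. ennreal B * L2_normsq \<mu> \<Omega> (g i))"
    using assms(2,3) unfolding frame_bounds_def by (intro sum_mono) blast
  finally show ?thesis by (simp add: sum_distrib_left)
qed

lemma L2_inner_eq_integral:
  assumes "\<And>y. y \<notin> \<Omega> \<Longrightarrow> f y = 0"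
  shows "L2_inner \<mu> \<Omega> f h = (\<integral>y. f y * cnj (h y) \<partial>\<mu>)"
  unfolding L2_inner_def set_lebesgue_integral_def
  by (rule Bochner_Integration.integral_cong) (auto simp: indicator_def assms)

lemma L2_normsq_le_indicator:
  assumes "S \<in> sets \<mu>" "\<And>y. y \<in> \<Omega> \<Longrightarrow> cmod (f y) \<le> c * indicator S y"
  shows "L2_normsq \<mu> \<Omega> f \<le> ennreal (c\<^sup>2) * emeasure \<mu> S"
proof -
  have "L2_normsq \<mu> \<Omega> f \<le> (\<integral>\<^sup>+ y. ennreal (c\<^sup>2) * indicator S y \<partial>\<mu>)"
    unfolding L2_normsq_def
  proof (rule nn_integral_mono)
    fix y
    show "ennreal ((cmod (f y))\<^sup>2) * indicator \<Omega> y \<le> ennreal (c\<^sup>2) * indicator S y"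
    proof (cases "y \<in> \<Omega>")
      case True
      then have "(cmod (f y))\<^sup>2 \<le> (c * indicator S y)\<^sup>2"
        using assms(2) by (intro power_mono) auto
      then show ?thesis using True by (auto simp: indicator_def intro: ennreal_leI)
    qed simp
  qed
  then show ?thesis using assms(1) by (simp add: nn_integral_cmult_indicator)
qed

section \<open>Characters and the annihilator of a lattice\<close>

locale dual_pairing =
  fixes e :: "'a::topological_ab_group_add \<Rightarrow> 'b::topological_ab_group_add \<Rightarrow> complex"
  assumes dual_pairing: "is_dual_pairing e"
begin

lemma character: "is_character (\<lambda>g. e g w)"
  using dual_pairing[unfolded is_dual_pairing_def, THEN conjunct1] by (rule spec)

lemma norm_e [simp]: "cmod (e g w) = 1"
  using character unfolding is_character_def by blast

lemma e_add_left: "e (g + h) w = e g w * e h w"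
  using character unfolding is_character_def by blast

lemma e_add_right: "e g (w + v) = e g w * e g v"
  using dual_pairing[unfolded is_dual_pairing_def, THEN conjunct2, THEN conjunct1] by blast

lemma continuous_on_e_left: "continuous_on UNIV (\<lambda>g. e g w)"
  using character unfolding is_character_def by blast

lemma open_dual_iff:
  "open U \<longleftrightarrow> (\<forall>w0\<in>U. \<exists>K \<epsilon>. compact K \<and> \<epsilon> > 0 \<and> {w. \<forall>g\<in>K. cmod (e g w - e g w0) < \<epsilon>} \<subseteq> U)"
  using dual_pairing[unfolded is_dual_pairing_def, THEN conjunct2, THEN conjunct2, THEN conjunct2]
  by (rule spec)

lemma e_times_cnj [simp]: "e g w * cnj (e g w) = 1"
proof -
  have "e g w * cnj (e g w) = complex_of_real ((cmod (e g w))\<^sup>2)"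
    by (rule complex_norm_square[symmetric])
  then show ?thesis by simp
qed

lemma e_zero_right [simp]: "e g 0 = 1"
proof -
  have "e g 0 * e g 0 = e g 0"
    by (rule e_add_right[of g 0 0, unfolded add_0_left, symmetric])
  then have "e g 0 * (e g 0 - 1) = 0" by (simp add: right_diff_distrib)
  moreover have "e g 0 \<noteq> 0" using norm_e[of g 0] by (auto simp del: norm_e)
  ultimately show ?thesis by simp
qed

lemma e_diff_right: "e g (w - v) = e g w * cnj (e g v)"
proof -
  have "e g (w - v) * e g v = e g w"
    using e_add_right[of g "w - v" v] by simp
  then have "e g (w - v) * (e g v * cnj (e g v)) = e g w * cnj (e g v)"
    by (simp only: mult.assoc[symmetric])
  then show ?thesis by simp
qed

lemma continuous_on_e_right: "continuous_on UNIV (e g)"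
  unfolding continuous_on_open_vimage[OF open_UNIV]
proof (intro allI impI)
  fix B :: "complex set"
  assume "open B"
  show "open (e g -` B \<inter> UNIV)"
    unfolding open_dual_iff
  proof
    fix w0 assume "w0 \<in> e g -` B \<inter> UNIV"
    with \<open>open B\<close> obtain \<epsilon> where "\<epsilon> > 0" "ball (e g w0) \<epsilon> \<subseteq> B"
      using open_contains_ball by blast
    then show "\<exists>K \<epsilon>. compact K \<and> \<epsilon> > 0 \<and> {w. \<forall>g\<in>K. cmod (e g w - e g w0) < \<epsilon>} \<subseteq> e g -` B \<inter> UNIV"
      by (intro exI[of _ "{g}"] exI[of _ \<epsilon>]) (auto simp: dist_norm norm_minus_commute)
  qed
qed

lemma continuous_on_e_right_comp [continuous_intros]:
  assumes "continuous_on S f"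
  shows "continuous_on S (\<lambda>x. e g (f x))"
  using continuous_on_compose2[OF continuous_on_e_right assms] by simp

lemma eq_0_if_trivial_character:
  assumes "\<And>g. e g w = 1"
  shows "w = 0"
proof -
  have "is_character (\<lambda>g::'a. 1 :: complex)"
    using character[of 0] by simp
  then have "\<exists>!w. (\<lambda>g::'a. 1 :: complex) = (\<lambda>g. e g w)"
    using dual_pairing[unfolded is_dual_pairing_def, THEN conjunct2, THEN conjunct2, THEN conjunct1]
    by blast
  moreover have "(\<lambda>g::'a. 1 :: complex) = (\<lambda>g. e g w)" "(\<lambda>g::'a. 1 :: complex) = (\<lambda>g. e g 0)"
    using assms by auto
  ultimately show ?thesis by blast
qed

text \<open>The circle group has no small subgroups.\<close>

lemma eq_0_if_character_near_1:
  assumes near: "\<And>g. cmod (e g w - 1) < 1"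
  shows "w = 0"
proof (rule eq_0_if_trivial_character)
  fix g
  have "cmod (e g w ^ (2 ^ n) - 1) < 1" for n
  proof (induction n arbitrary: g)
    case (Suc n)
    have "e g w ^ (2 ^ Suc n) = e (g + g) w ^ (2 ^ n)"
      by (simp add: e_add_left power_mult power2_eq_square[symmetric] mult.commute)
    with Suc[of "g + g"] show ?case by simp
  qed (simp add: near)
  then show "e g w = 1" by (intro unimodular_eq_1_if_squares_near_1) simp_all
qed

lemma open_near_1_on_compact:
  assumes "compact K"
  shows "open {w. \<forall>g\<in>K. cmod (e g w - 1) < 1}"
  unfolding open_dual_iff
proof
  fix w0 assume w0: "w0 \<in> {w. \<forall>g\<in>K. cmod (e g w - 1) < 1}"
  obtain r where r: "r < 1" "\<And>g. g \<in> K \<Longrightarrow> cmod (e g w0 - 1) \<le> r"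
  proof (cases "K = {}")
    case False
    have "continuous_on K (\<lambda>g. cmod (e g w0 - 1))"
      by (intro continuous_intros continuous_on_subset[OF continuous_on_e_left]) auto
    then obtain g0 where "g0 \<in> K" "\<And>g. g \<in> K \<Longrightarrow> cmod (e g w0 - 1) \<le> cmod (e g0 w0 - 1)"
      using continuous_attains_sup[OF assms False] by blast
    with w0 that show ?thesis by blast
  qed (use that[of 0] in auto)
  have "{w. \<forall>g\<in>K. cmod (e g w - e g w0) < 1 - r} \<subseteq> {w. \<forall>g\<in>K. cmod (e g w - 1) < 1}"
  proof (safe)
    fix w g assume "\<forall>g\<in>K. cmod (e g w - e g w0) < 1 - r" "g \<in> K"
    moreover have "cmod (e g w - 1) \<le> cmod (e g w - e g w0) + cmod (e g w0 - 1)"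
      using norm_triangle_ineq[of "e g w - e g w0" "e g w0 - 1"] by simp
    ultimately show "cmod (e g w - 1) < 1" using r(2)[of g] by fastforce
  qed
  with assms r(1) show "\<exists>K' \<epsilon>. compact K' \<and> \<epsilon> > 0 \<and>
      {w. \<forall>g\<in>K'. cmod (e g w - e g w0) < \<epsilon>} \<subseteq> {w. \<forall>g\<in>K. cmod (e g w - 1) < 1}"
    by (intro exI[of _ K] exI[of _ "1 - r"]) auto
qed

end

locale lattice_annihilator = dual_pairing e
  for e :: "'a::topological_ab_group_add \<Rightarrow> 'b::{topological_ab_group_add, second_countable_topology} \<Rightarrow> complex" +
  fixes \<Lambda> :: "'a set"
  assumes uniform_lattice: "uniform_lattice \<Lambda>"
begin

abbreviation \<Gamma> :: "'b set" where "\<Gamma> \<equiv> annihilator e \<Lambda>"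

lemma zero_in_annihilator: "0 \<in> \<Gamma>"
  by (simp add: annihilator_def)

lemma annihilator_diff: "\<gamma> \<in> \<Gamma> \<Longrightarrow> \<gamma>' \<in> \<Gamma> \<Longrightarrow> \<gamma> - \<gamma>' \<in> \<Gamma>"
  by (simp add: annihilator_def e_diff_right)

lemma e_lattice_annihilator [simp]: "l \<in> \<Lambda> \<Longrightarrow> \<gamma> \<in> \<Gamma> \<Longrightarrow> e l \<gamma> = 1"
  by (simp add: annihilator_def)

text \<open>Co-compactness of \<open>\<Lambda>\<close> makes \<open>\<Gamma>\<close> discrete.\<close>

lemma annihilator_isolated_zero: "\<exists>U. open U \<and> 0 \<in> U \<and> \<Gamma> \<inter> U = {0}"
proof -
  obtain K where K: "compact K" "{k + l | k l. k \<in> K \<and> l \<in> \<Lambda>} = UNIV"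
    using uniform_lattice[unfolded uniform_lattice_def, THEN conjunct2, THEN conjunct2, THEN conjunct2]
    by blast
  define U where "U = {w. \<forall>g\<in>K. cmod (e g w - 1) < 1}"
  have "\<gamma> = 0" if "\<gamma> \<in> \<Gamma>" "\<gamma> \<in> U" for \<gamma>
  proof (rule eq_0_if_character_near_1)
    fix y
    have "y \<in> {k + l | k l. k \<in> K \<and> l \<in> \<Lambda>}" using K(2) by simp
    then obtain k l where "y = k + l" "k \<in> K" "l \<in> \<Lambda>" by blast
    with that show "cmod (e y \<gamma> - 1) < 1" by (simp add: U_def e_add_left)
  qed
  moreover have "open U" unfolding U_def by (rule open_near_1_on_compact[OF K(1)])
  ultimately show ?thesis by (intro exI[of _ U]) (auto simp: U_def zero_in_annihilator)
qed

lemma annihilator_uniformly_discrete: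
  obtains V where "open V" "0 \<in> V" "\<And>v v'. v \<in> V \<Longrightarrow> v' \<in> V \<Longrightarrow> v' - v \<in> \<Gamma> \<Longrightarrow> v' = v"
proof -
  obtain U where U: "open U" "0 \<in> U" "\<Gamma> \<inter> U = {0}" using annihilator_isolated_zero by blast
  obtain V where V: "open V" "0 \<in> V" "\<And>v v'. v \<in> V \<Longrightarrow> v' \<in> V \<Longrightarrow> v' - v \<in> U"
    using exists_open_diff_subset[OF U(1,2)] by blast
  show ?thesis
  proof (rule that[OF V(1,2)])
    fix v v' assume "v \<in> V" "v' \<in> V" "v' - v \<in> \<Gamma>"
    then have "v' - v \<in> \<Gamma> \<inter> U" using V(3) by blast
    then have "v' - v = 0" using U(3) by simp
    then show "v' = v" by simp
  qed
qed

lemma countable_annihilator: "countable \<Gamma>"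
proof -
  obtain V where V: "open V" "0 \<in> V" "\<And>v v'. v \<in> V \<Longrightarrow> v' \<in> V \<Longrightarrow> v' - v \<in> \<Gamma> \<Longrightarrow> v' = v"
    using annihilator_uniformly_discrete by blast
  obtain X where X: "countable X" "\<And>y. \<exists>x\<in>X. y - x \<in> V"
    using countable_translates_cover[OF V(1,2)] by blast
  have "finite (\<Gamma> \<inter> {y. y - x \<in> V})" for x
  proof (cases "\<Gamma> \<inter> {y. y - x \<in> V} = {}")
    case False
    then obtain \<gamma> where \<gamma>: "\<gamma> \<in> \<Gamma> \<inter> {y. y - x \<in> V}" by blast
    have "\<gamma>' = \<gamma>" if "\<gamma>' \<in> \<Gamma> \<inter> {y. y - x \<in> V}" for \<gamma>'
      using V(3)[of "\<gamma> - x" "\<gamma>' - x"] \<gamma> that annihilator_diff by simp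
    then have "\<Gamma> \<inter> {y. y - x \<in> V} \<subseteq> {\<gamma>}" by blast
    then show ?thesis by (rule finite_subset) simp
  qed simp
  then have "countable (\<Union>x\<in>X. \<Gamma> \<inter> {y. y - x \<in> V})"
    by (intro countable_UN[OF X(1)] countable_finite)
  moreover have "\<Gamma> = (\<Union>x\<in>X. \<Gamma> \<inter> {y. y - x \<in> V})" using X(2) by blast
  ultimately show ?thesis by simp
qed

lemma e_shift_annihilator:
  assumes "l \<in> \<Lambda>" "\<gamma> \<in> \<Gamma>"
  shows "e (g + l) (w + \<gamma>) = e l w * e g (w + \<gamma>)"
  using assms by (simp add: e_add_left e_add_right)

end

section \<open>Translation invariance of Haar measure\<close>

locale haar_measure =
  fixes \<mu> :: "'b::topological_ab_group_add measure"
  assumes haar: "is_haar_measure \<mu>"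
begin

lemma sets_haar [measurable_cong]: "sets \<mu> = sets borel"
  using haar[unfolded is_haar_measure_def, THEN conjunct1] .

lemma emeasure_translation_image: "A \<in> sets borel \<Longrightarrow> emeasure \<mu> ((\<lambda>y. x + y) ` A) = emeasure \<mu> A"
  using haar[unfolded is_haar_measure_def, THEN conjunct2, THEN conjunct2, THEN conjunct2] by blast

lemma space_haar [simp]: "space \<mu> = UNIV"
  using sets_eq_imp_space_eq[OF sets_haar] by simp

lemma borel_measurable_continuous_on_haar:
  "continuous_on UNIV u \<Longrightarrow> u \<in> borel_measurable \<mu>"
  unfolding measurable_cong_sets[OF sets_haar refl] by (rule borel_measurable_continuous_onI)

lemma translation_measurable: "(\<lambda>y. y + x) \<in> measurable \<mu> \<mu>"
proof -
  have "continuous_on UNIV (\<lambda>y::'b. y + x)" by (intro continuous_intros)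
  then show ?thesis
    unfolding measurable_cong_sets[OF sets_haar sets_haar] by (rule borel_measurable_continuous_onI)
qed

lemma distr_translation: "distr \<mu> \<mu> (\<lambda>y. y + x) = \<mu>"
proof (rule measure_eqI)
  fix A assume "A \<in> sets (distr \<mu> \<mu> (\<lambda>y. y + x))"
  then have A: "A \<in> sets \<mu>" by simp
  have "(\<lambda>y. y + x) -` A \<inter> space \<mu> = (\<lambda>y. - x + y) ` A"
    by (force simp: image_iff algebra_simps)
  moreover have "emeasure \<mu> ((\<lambda>y. - x + y) ` A) = emeasure \<mu> A"
    using emeasure_translation_image[of A "- x"] A by (simp add: sets_haar)
  ultimately show "emeasure (distr \<mu> \<mu> (\<lambda>y. y + x)) A = emeasure \<mu> A"
    using A by (simp add: emeasure_distr[OF translation_measurable A])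
qed simp

lemma integral_translation:
  fixes u :: "'b \<Rightarrow> 'c::{banach, second_countable_topology}"
  assumes "u \<in> borel_measurable \<mu>"
  shows "(\<integral>y. u (y + x) \<partial>\<mu>) = integral\<^sup>L \<mu> u"
  using integral_distr[OF translation_measurable assms] distr_translation by simp

lemma translate_sets: "A \<in> sets \<mu> \<Longrightarrow> {y. y - x \<in> A} \<in> sets \<mu>"
  using measurable_sets[OF translation_measurable, of A "- x"] by (simp add: vimage_def)

lemma emeasure_translate: "A \<in> sets \<mu> \<Longrightarrow> emeasure \<mu> {y. y - x \<in> A} = emeasure \<mu> A"
  using emeasure_distr[OF translation_measurable, of A "- x"] distr_translation[of "- x"]
  by (simp add: vimage_def)

lemma integral_indicator_translate:
  fixes u :: "'b \<Rightarrow> complex"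
  assumes "A \<in> sets \<mu>" "u \<in> borel_measurable \<mu>"
  shows "(\<integral>y. indicator {y. y - x \<in> A} y * u y \<partial>\<mu>) = (\<integral>w. indicator A w * u (w + x) \<partial>\<mu>)"
proof -
  have "(\<lambda>y. indicator {y. y - x \<in> A} y * u y) \<in> borel_measurable \<mu>"
    using assms by (intro borel_measurable_times borel_measurable_indicator translate_sets)
  from integral_translation[OF this, of x] show ?thesis by (simp add: indicator_def)
qed

lemma integrable_indicator_bounded:
  fixes u :: "'b \<Rightarrow> complex"
  assumes "A \<in> sets \<mu>" "emeasure \<mu> A < \<infinity>" "u \<in> borel_measurable \<mu>" "\<And>y. cmod (u y) \<le> C"
  shows "integrable \<mu> (\<lambda>y. indicator A y * u y)"
proof (rule Bochner_Integration.integrable_bound[where f="\<lambda>y. indicator A y * C"])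
  show "integrable \<mu> (\<lambda>y. indicator A y * C)"
    using assms(1,2) by (intro integrable_mult_left) simp
  show "(\<lambda>y. indicator A y * u y) \<in> borel_measurable \<mu>"
    using assms(1,3) by measurable
  have "0 \<le> C" using assms(4) norm_ge_zero order_trans by blast
  then show "AE y in \<mu>. cmod (indicator A y * u y) \<le> norm (indicator A y * C)"
    using assms(4) by (intro AE_I2) (auto simp: indicator_def norm_mult)
qed

lemma integrable_indicator_continuous:
  assumes "S \<in> sets \<mu>" "emeasure \<mu> S < \<infinity>" "continuous_on UNIV u" "\<And>y. cmod (u y) \<le> 1"
  shows "integrable \<mu> (\<lambda>y. c * (indicator S y * u y))"
  using assms by (intro integrable_mult_right integrable_indicator_bounded borel_measurable_continuous_on_haar)

end

section \<open>Null sets from the frame inequalities\<close>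

locale frame_setting = lattice_annihilator e \<Lambda> + haar_measure \<mu>
  for e :: "'a::topological_ab_group_add \<Rightarrow> 'b::{topological_ab_group_add, second_countable_topology} \<Rightarrow> complex"
    and \<Lambda> :: "'a set" and \<mu> :: "'b measure" +
  fixes \<Omega> :: "'b set" and L :: nat and a :: "nat \<Rightarrow> 'a" and A B :: real
  assumes \<Omega>_sets: "\<Omega> \<in> sets \<mu>" and \<Omega>_finite: "emeasure \<mu> \<Omega> < \<infinity>"
    and A_pos: "0 < A" and A_le_B: "A \<le> B"
    and frame: "frame_bounds \<mu> \<Omega> ({1..L} \<times> \<Lambda>) (\<lambda>(j, l). e (a j + l)) A B"
begin

lemma frame_lower_bound:
  "in_L2 \<mu> \<Omega> f \<Longrightarrow> ennreal A * L2_normsq \<mu> \<Omega> f \<le> frame_sum \<mu> \<Omega> ({1..L} \<times> \<Lambda>) (\<lambda>(j, l). e (a j + l)) f"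
  using frame unfolding frame_bounds_def by blast

end

locale translated_pieces = frame_setting +
  fixes E :: "'b set" and \<gamma> :: "nat \<Rightarrow> 'b" and q :: "nat \<Rightarrow> complex" and n k0 :: nat and \<eta> :: real
  assumes E_sets: "E \<in> sets \<mu>"
    and \<gamma>_annihilator: "\<And>k. k < n \<Longrightarrow> \<gamma> k \<in> \<Gamma>"
    and translates_disjoint:
      "\<And>k k' w w'. k < n \<Longrightarrow> k' < n \<Longrightarrow> w \<in> E \<Longrightarrow> w' \<in> E \<Longrightarrow> w + \<gamma> k = w' + \<gamma> k' \<Longrightarrow> k = k'"
    and translates_inside: "\<And>k w. k < n \<Longrightarrow> w \<in> E \<Longrightarrow> w + \<gamma> k \<in> \<Omega>"
    and k0: "k0 < n" "1/2 \<le> cmod (q k0)"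
    and combination_small:
      "\<And>j w. j \<in> {1..L} \<Longrightarrow> w \<in> E \<Longrightarrow> cmod (\<Sum>k<n. q k * cnj (e (a j) (w + \<gamma> k))) \<le> \<eta>"
begin

definition piece :: "nat \<Rightarrow> 'b set"
  where "piece k = {y. y - \<gamma> k \<in> E}"

definition combination :: "nat \<Rightarrow> 'b \<Rightarrow> complex"
  where "combination j w = (\<Sum>k<n. q k * cnj (e (a j) (w + \<gamma> k)))"

definition test_function :: "'b \<Rightarrow> complex"
  where "test_function y = (\<Sum>k<n. q k * indicator (piece k) y)"

text \<open>The factor \<open>e (a j) y\<close> cancels against \<open>e (a j + l)\<close>, so that \<open>comparison_function j\<close>
  has the same coefficients against \<open>e (a j + l)\<close> as \<open>test_function\<close>.\<close>

definition comparison_function :: "nat \<Rightarrow> 'b \<Rightarrow> complex"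
  where "comparison_function j y = indicator (piece k0) y * combination j (y - \<gamma> k0) * e (a j) y"

lemma piece_sets: "piece k \<in> sets \<mu>"
  unfolding piece_def by (rule translate_sets[OF E_sets])

lemma emeasure_piece: "emeasure \<mu> (piece k) = emeasure \<mu> E"
  unfolding piece_def by (rule emeasure_translate[OF E_sets])

lemma piece_subset: "k < n \<Longrightarrow> piece k \<subseteq> \<Omega>"
  using translates_inside[of k "_ - \<gamma> k"] by (force simp: piece_def)

lemma pieces_disjoint: "k < n \<Longrightarrow> k' < n \<Longrightarrow> y \<in> piece k \<Longrightarrow> y \<in> piece k' \<Longrightarrow> k = k'"
  using translates_disjoint[of k k' "y - \<gamma> k" "y - \<gamma> k'"] by (simp add: piece_def)

lemma emeasure_E_finite: "emeasure \<mu> E < \<infinity>"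
  using emeasure_mono[OF piece_subset[OF k0(1)] \<Omega>_sets] \<Omega>_finite by (simp add: emeasure_piece)

lemma continuous_on_combination: "continuous_on UNIV (combination j)"
  unfolding combination_def[abs_def] by (intro continuous_intros)

lemma test_function_on_piece:
  assumes "k < n" "y \<in> piece k"
  shows "test_function y = q k"
proof -
  have "test_function y = q k * indicator (piece k) y + (\<Sum>k'\<in>{..<n} - {k}. q k' * indicator (piece k') y)"
    unfolding test_function_def using assms(1) by (subst sum.remove[of _ k]) auto
  moreover have "(\<Sum>k'\<in>{..<n} - {k}. q k' * indicator (piece k') y) = 0"
    using pieces_disjoint[OF _ assms(1) _ assms(2)] by (intro sum.neutral) (auto simp: indicator_def)
  ultimately show ?thesis using assms(2) by simp
qed

lemma test_function_outside: "y \<notin> \<Omega> \<Longrightarrow> test_function y = 0"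
  unfolding test_function_def using piece_subset by (intro sum.neutral) (auto simp: indicator_def)

lemma test_function_in_L2: "in_L2 \<mu> \<Omega> test_function"
proof -
  define M where "M = (\<Sum>k<n. cmod (q k))"
  have "cmod (test_function y) \<le> M * indicator \<Omega> y" if "y \<in> \<Omega>" for y
  proof -
    have "cmod (test_function y) \<le> (\<Sum>k<n. cmod (q k * indicator (piece k) y))"
      unfolding test_function_def by (rule norm_sum)
    also have "\<dots> \<le> M" unfolding M_def by (intro sum_mono) (auto simp: indicator_def)
    finally show ?thesis using that by simp
  qed
  then have "L2_normsq \<mu> \<Omega> test_function \<le> ennreal (M\<^sup>2) * emeasure \<mu> \<Omega>"
    by (rule L2_normsq_le_indicator[OF \<Omega>_sets])
  also have "\<dots> < \<infinity>" using \<Omega>_finite by (simp add: ennreal_mult_less_top)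
  moreover have "test_function \<in> borel_measurable \<mu>"
    unfolding test_function_def[abs_def]
    by (intro borel_measurable_sum borel_measurable_times borel_measurable_const
        borel_measurable_indicator piece_sets)
  ultimately show ?thesis unfolding in_L2_def by simp
qed

lemma L2_normsq_test_function_ge: "ennreal (1/4) * emeasure \<mu> E \<le> L2_normsq \<mu> \<Omega> test_function"
proof -
  have "ennreal (1/4) * emeasure \<mu> E = (\<integral>\<^sup>+ y. ennreal (1/4) * indicator (piece k0) y \<partial>\<mu>)"
    by (simp add: nn_integral_cmult_indicator[OF piece_sets] emeasure_piece)
  also have "\<dots> \<le> L2_normsq \<mu> \<Omega> test_function"
    unfolding L2_normsq_def
  proof (rule nn_integral_mono)
    fix y
    show "ennreal (1/4) * indicator (piece k0) y \<le> ennreal ((cmod (test_function y))\<^sup>2) * indicator \<Omega> y"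
    proof (cases "y \<in> piece k0")
      case True
      have "(1/2::real)\<^sup>2 \<le> (cmod (q k0))\<^sup>2" using k0(2) by (intro power_mono) auto
      then show ?thesis
        using True piece_subset[OF k0(1)] test_function_on_piece[OF k0(1) True]
        by (auto simp: power2_eq_square intro: ennreal_leI)
    qed simp
  qed
  finally show ?thesis .
qed

lemma comparison_function_outside: "y \<notin> \<Omega> \<Longrightarrow> comparison_function j y = 0"
  using piece_subset[OF k0(1)] by (auto simp: comparison_function_def indicator_def)

lemma comparison_function_measurable: "comparison_function j \<in> borel_measurable \<mu>"
proof -
  have "continuous_on UNIV (\<lambda>y. combination j (y - \<gamma> k0) * e (a j) y)"
    by (intro continuous_intros continuous_on_compose2[OF continuous_on_combination]) auto
  then show ?thesis
    unfolding comparison_function_def[abs_def] mult.assoc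
    by (intro borel_measurable_times borel_measurable_indicator piece_sets
        borel_measurable_continuous_on_haar)
qed

lemma comparison_function_in_L2:
  assumes "j \<in> {1..L}"
  shows "in_L2 \<mu> \<Omega> (comparison_function j)"
    and "L2_normsq \<mu> \<Omega> (comparison_function j) \<le> ennreal (\<eta>\<^sup>2) * emeasure \<mu> E"
proof -
  have "cmod (comparison_function j y) \<le> \<eta> * indicator (piece k0) y" for y
    using combination_small[OF assms, of "y - \<gamma> k0"]
    by (auto simp: comparison_function_def combination_def piece_def indicator_def norm_mult)
  then have "L2_normsq \<mu> \<Omega> (comparison_function j) \<le> ennreal (\<eta>\<^sup>2) * emeasure \<mu> (piece k0)"
    by (intro L2_normsq_le_indicator[OF piece_sets])
  then show bound: "L2_normsq \<mu> \<Omega> (comparison_function j) \<le> ennreal (\<eta>\<^sup>2) * emeasure \<mu> E"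
    by (simp add: emeasure_piece)
  with bound comparison_function_measurable emeasure_E_finite show "in_L2 \<mu> \<Omega> (comparison_function j)"
    unfolding in_L2_def by (auto simp: ennreal_mult_less_top intro: le_less_trans)
qed

lemma L2_inner_test_function:
  assumes "l \<in> \<Lambda>"
  shows "L2_inner \<mu> \<Omega> test_function (e (a j + l)) = (\<integral>w. indicator E w * (cnj (e l w) * combination j w) \<partial>\<mu>)"
proof -
  have "L2_inner \<mu> \<Omega> test_function (e (a j + l)) = (\<integral>y. test_function y * cnj (e (a j + l) y) \<partial>\<mu>)"
    by (rule L2_inner_eq_integral) (rule test_function_outside)
  also have "\<dots> = (\<integral>y. (\<Sum>k<n. q k * (indicator (piece k) y * cnj (e (a j + l) y))) \<partial>\<mu>)"
    by (intro Bochner_Integration.integral_cong refl)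
      (simp only: test_function_def sum_distrib_right mult.assoc)
  also have "\<dots> = (\<Sum>k<n. q k * (\<integral>y. indicator (piece k) y * cnj (e (a j + l) y) \<partial>\<mu>))"
    using emeasure_E_finite
    by (subst Bochner_Integration.integral_sum)
      (auto intro!: integrable_indicator_continuous piece_sets continuous_intros simp: emeasure_piece)
  also have "\<dots> = (\<Sum>k<n. q k * (\<integral>w. indicator E w * (cnj (e l w) * cnj (e (a j) (w + \<gamma> k))) \<partial>\<mu>))"
  proof (intro sum.cong refl arg_cong2[where f="(*)"])
    fix k assume "k \<in> {..<n}"
    then have "(\<integral>y. indicator (piece k) y * cnj (e (a j + l) y) \<partial>\<mu>)
        = (\<integral>w. indicator E w * cnj (e (a j + l) (w + \<gamma> k)) \<partial>\<mu>)"
      unfolding piece_def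
      by (intro integral_indicator_translate E_sets borel_measurable_continuous_on_haar continuous_intros)
    also have "\<dots> = (\<integral>w. indicator E w * (cnj (e l w) * cnj (e (a j) (w + \<gamma> k))) \<partial>\<mu>)"
      using \<open>k \<in> {..<n}\<close> by (simp add: e_shift_annihilator[OF assms] \<gamma>_annihilator)
    finally show "(\<integral>y. indicator (piece k) y * cnj (e (a j + l) y) \<partial>\<mu>)
        = (\<integral>w. indicator E w * (cnj (e l w) * cnj (e (a j) (w + \<gamma> k))) \<partial>\<mu>)" .
  qed
  also have "\<dots> = (\<integral>w. (\<Sum>k<n. q k * (indicator E w * (cnj (e l w) * cnj (e (a j) (w + \<gamma> k))))) \<partial>\<mu>)"
    using emeasure_E_finite
    by (subst Bochner_Integration.integral_sum)
      (auto intro!: integrable_indicator_continuous E_sets continuous_intros simp: norm_mult)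
  also have "\<dots> = (\<integral>w. indicator E w * (cnj (e l w) * combination j w) \<partial>\<mu>)"
    unfolding combination_def
    by (intro Bochner_Integration.integral_cong refl) (simp add: sum_distrib_left algebra_simps)
  finally show ?thesis .
qed

lemma L2_inner_comparison_function:
  assumes "l \<in> \<Lambda>"
  shows "L2_inner \<mu> \<Omega> (comparison_function j) (e (a j + l))
    = (\<integral>w. indicator E w * (cnj (e l w) * combination j w) \<partial>\<mu>)"
proof -
  have "L2_inner \<mu> \<Omega> (comparison_function j) (e (a j + l))
      = (\<integral>y. comparison_function j y * cnj (e (a j + l) y) \<partial>\<mu>)"
    by (rule L2_inner_eq_integral) (rule comparison_function_outside)
  also have "\<dots> = (\<integral>w. comparison_function j (w + \<gamma> k0) * cnj (e (a j + l) (w + \<gamma> k0)) \<partial>\<mu>)"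
    by (rule integral_translation[symmetric])
      (intro borel_measurable_times comparison_function_measurable borel_measurable_continuous_on_haar
        continuous_intros)
  also have "\<dots> = (\<integral>w. indicator E w * (cnj (e l w) * combination j w) \<partial>\<mu>)"
  proof (intro Bochner_Integration.integral_cong refl)
    fix w
    have "comparison_function j (w + \<gamma> k0) = indicator E w * combination j w * e (a j) (w + \<gamma> k0)"
      by (simp add: comparison_function_def piece_def indicator_def)
    moreover have "e (a j + l) (w + \<gamma> k0) = e l w * e (a j) (w + \<gamma> k0)"
      by (rule e_shift_annihilator[OF assms \<gamma>_annihilator[OF k0(1)]])
    ultimately have "comparison_function j (w + \<gamma> k0) * cnj (e (a j + l) (w + \<gamma> k0))
        = indicator E w * (cnj (e l w) * combination j w) * (e (a j) (w + \<gamma> k0) * cnj (e (a j) (w + \<gamma> k0)))"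
      by (simp add: ac_simps)
    then show "comparison_function j (w + \<gamma> k0) * cnj (e (a j + l) (w + \<gamma> k0))
        = indicator E w * (cnj (e l w) * combination j w)"
      by simp
  qed
  finally show ?thesis .
qed

lemma emeasure_eq_0:
  assumes small: "real L * B * \<eta>\<^sup>2 < A / 4"
  shows "emeasure \<mu> E = 0"
proof (rule ccontr)
  assume "emeasure \<mu> E \<noteq> 0"
  then obtain m where m: "emeasure \<mu> E = ennreal m" "0 < m"
    using emeasure_E_finite by (cases "emeasure \<mu> E") (auto simp: ennreal_less_zero_iff)
  have "ennreal (A * (1/4 * m)) = ennreal A * (ennreal (1/4) * emeasure \<mu> E)"
    using A_pos m by (simp only: m(1) ennreal_mult[symmetric] mult_nonneg_nonneg)
  also have "\<dots> \<le> ennreal A * L2_normsq \<mu> \<Omega> test_function"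
    by (intro mult_left_mono L2_normsq_test_function_ge) simp
  also have "\<dots> \<le> frame_sum \<mu> \<Omega> ({1..L} \<times> \<Lambda>) (\<lambda>(j, l). e (a j + l)) test_function"
    by (rule frame_lower_bound[OF test_function_in_L2])
  also have "\<dots> \<le> ennreal B * (\<Sum>j\<in>{1..L}. L2_normsq \<mu> \<Omega> (comparison_function j))"
    by (rule frame_sum_le_blockwise[OF _ frame])
      (simp_all add: comparison_function_in_L2 L2_inner_test_function L2_inner_comparison_function)
  also have "\<dots> \<le> ennreal B * (\<Sum>j\<in>{1..L}. ennreal (\<eta>\<^sup>2) * emeasure \<mu> E)"
    by (intro mult_left_mono sum_mono comparison_function_in_L2(2)) auto
  also have "\<dots> = ennreal (real L * B * \<eta>\<^sup>2 * m)"
    using A_pos A_le_B m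
    by (simp add: m(1) ennreal_mult[symmetric] ennreal_of_nat_eq_real_of_nat mult_ac)
  finally have "A / 4 * m \<le> real L * B * \<eta>\<^sup>2 * m"
    using A_pos A_le_B m(2) by (subst (asm) ennreal_le_iff) auto
  with small m(2) show False by simp
qed

end

context frame_setting
begin

definition near_kernel_set :: "'b set \<Rightarrow> 'b \<Rightarrow> 'b list \<Rightarrow> complex list \<Rightarrow> real \<Rightarrow> 'b set"
  where "near_kernel_set V x gs qs \<eta> = {w. w - x \<in> V \<and> (\<forall>k<length gs. w + gs ! k \<in> \<Omega>) \<and>
    (\<forall>j\<in>{1..L}. cmod (\<Sum>k<length gs. qs ! k * cnj (e (a j) (w + gs ! k))) \<le> \<eta>)}"

lemma near_kernel_set_sets:
  assumes "open V"
  shows "near_kernel_set V x gs qs \<eta> \<in> sets \<mu>"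
proof -
  have "continuous_on UNIV (\<lambda>w::'b. w - x)" by (intro continuous_intros)
  then have "open ((\<lambda>w. w - x) -` V \<inter> UNIV)"
    using assms continuous_on_open_vimage[OF open_UNIV] by blast
  then have "open {w. w - x \<in> V}" by (simp add: vimage_def)
  moreover have "{w. w + gs ! k \<in> \<Omega>} \<in> sets \<mu>" for k
    using translate_sets[OF \<Omega>_sets, of "- gs ! k"] by simp
  moreover have "closed {w. cmod (\<Sum>k<length gs. qs ! k * cnj (e (a j) (w + gs ! k))) \<le> \<eta>}" for j
    by (intro closed_Collect_le continuous_intros)
  ultimately have "{w. w - x \<in> V} \<inter> (\<Inter>k<length gs. {w. w + gs ! k \<in> \<Omega>})
      \<inter> (\<Inter>j\<in>{1..L}. {w. cmod (\<Sum>k<length gs. qs ! k * cnj (e (a j) (w + gs ! k))) \<le> \<eta>}) \<in> sets \<mu>"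
    using sets.top[of \<mu>] by (intro sets.Int sets.countable_INT'') (auto simp: sets_haar)
  moreover have "near_kernel_set V x gs qs \<eta> = {w. w - x \<in> V} \<inter> (\<Inter>k<length gs. {w. w + gs ! k \<in> \<Omega>})
      \<inter> (\<Inter>j\<in>{1..L}. {w. cmod (\<Sum>k<length gs. qs ! k * cnj (e (a j) (w + gs ! k))) \<le> \<eta>})"
    unfolding near_kernel_set_def by auto
  ultimately show ?thesis by simp
qed

lemma near_kernel_set_null:
  assumes V: "open V" "\<And>v v'. v \<in> V \<Longrightarrow> v' \<in> V \<Longrightarrow> v' - v \<in> \<Gamma> \<Longrightarrow> v' = v"
    and gs: "set gs \<subseteq> \<Gamma>" "distinct gs"
    and k0: "k0 < length gs" "1/2 \<le> cmod (qs ! k0)"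
    and small: "real L * B * \<eta>\<^sup>2 < A / 4"
  shows "near_kernel_set V x gs qs \<eta> \<in> null_sets \<mu>"
proof -
  let ?E = "near_kernel_set V x gs qs \<eta>"
  have "translated_pieces e \<Lambda> \<mu> \<Omega> L a A B ?E (nth gs) (nth qs) (length gs) k0 \<eta>"
  proof
    show "?E \<in> sets \<mu>" by (rule near_kernel_set_sets[OF V(1)])
    fix k k' w w' assume "k < length gs" "k' < length gs" "w \<in> ?E" "w' \<in> ?E" "w + gs ! k = w' + gs ! k'"
    moreover from this have "(w - x) - (w' - x) = gs ! k' - gs ! k" by (simp add: algebra_simps)
    moreover have "gs ! k' - gs ! k \<in> \<Gamma>" using gs(1) \<open>k < length gs\<close> \<open>k' < length gs\<close>
      by (intro annihilator_diff) auto
    ultimately show "k = k'"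
      using V(2)[of "w' - x" "w - x"] gs(2) by (auto simp: near_kernel_set_def nth_eq_iff_index_eq)
  qed (use gs k0 in \<open>auto simp: near_kernel_set_def\<close>)
  then have "emeasure \<mu> ?E = 0" using small by (rule translated_pieces.emeasure_eq_0)
  then show ?thesis using near_kernel_set_sets[OF V(1)] by (rule null_setsI)
qed

lemma AE_F_count_le: "AE w in \<mu>. F_count \<Omega> \<Gamma> w \<le> of_nat L"
proof -
  obtain \<eta> where \<eta>: "0 < \<eta>" "real L * B * \<eta>\<^sup>2 < A / 4"
    using exists_pos_mult_square_less[of "A / 4" "real L * B"] A_pos by auto
  obtain V where V: "open V" "0 \<in> V" "\<And>v v'. v \<in> V \<Longrightarrow> v' \<in> V \<Longrightarrow> v' - v \<in> \<Gamma> \<Longrightarrow> v' = v"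
    using annihilator_uniformly_discrete by blast
  obtain X where X: "countable X" "\<And>y. \<exists>x\<in>X. y - x \<in> V"
    using countable_translates_cover[OF V(1,2)] by blast
  obtain D :: "complex set" where D: "countable D" "\<And>U. open U \<Longrightarrow> U \<noteq> {} \<Longrightarrow> \<exists>d\<in>D. d \<in> U"
    using countable_dense_setE by blast
  define Gs where "Gs = {gs \<in> lists \<Gamma>. distinct gs \<and> length gs = Suc L}"
  define Qs where "Qs = {qs \<in> lists D. length qs = Suc L \<and> (\<exists>k0<Suc L. 1/2 \<le> cmod (qs ! k0))}"
  define N where "N = (\<Union>x\<in>X. \<Union>gs\<in>Gs. \<Union>qs\<in>Qs. near_kernel_set V x gs qs \<eta>)"
  have "countable Gs" "countable Qs"
    using countable_lists[OF countable_annihilator] countable_lists[OF D(1)]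
    by (auto simp: Gs_def Qs_def elim: countable_subset[rotated])
  then have "N \<in> null_sets \<mu>"
    unfolding N_def using X(1) V(1,3) \<eta>(2)
    by (intro null_sets_UN') (auto simp: Gs_def Qs_def intro!: near_kernel_set_null)
  moreover have "{w \<in> space \<mu>. \<not> F_count \<Omega> \<Gamma> w \<le> of_nat L} \<subseteq> N"
  proof safe
    fix w assume "\<not> F_count \<Omega> \<Gamma> w \<le> of_nat L"
    then obtain gs where gs: "set gs \<subseteq> \<Gamma>" "distinct gs" "length gs = Suc L"
        "\<And>k. k < length gs \<Longrightarrow> w + gs ! k \<in> \<Omega>"
      by (rule exists_distinct_translates_in) blast
    obtain qs k0 where qs: "set qs \<subseteq> D" "length qs = Suc L" "k0 < Suc L" "1/2 \<le> cmod (qs ! k0)"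
        "\<And>j. j < L \<Longrightarrow> cmod (\<Sum>k<Suc L. qs ! k * cnj (e (a (Suc j)) (w + gs ! k))) \<le> \<eta>"
      by (rule exists_dense_near_kernel[OF D(2) _ \<eta>(1),
          where v="\<lambda>j k. cnj (e (a (Suc j)) (w + gs ! k))" and m=L]) auto
    obtain x where "x \<in> X" "w - x \<in> V" using X(2) by blast
    moreover have "cmod (\<Sum>k<Suc L. qs ! k * cnj (e (a j) (w + gs ! k))) \<le> \<eta>" if j: "j \<in> {1..L}" for j
    proof -
      obtain j' where "j = Suc j'" "j' < L" using j by (cases j) auto
      with qs(5)[of j'] show ?thesis by simp
    qed
    ultimately have "w \<in> near_kernel_set V x gs qs \<eta>"
      using gs by (simp add: near_kernel_set_def)
    moreover have "gs \<in> Gs" using gs(1-3) by (auto simp: Gs_def)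
    moreover have "qs \<in> Qs" using qs(1-4) by (auto simp: Qs_def)
    ultimately show "w \<in> N" unfolding N_def using \<open>x \<in> X\<close> by blast
  qed
  ultimately show ?thesis by (rule AE_I')
qed

end

theorem theorem1:
  fixes e :: "'a::{topological_ab_group_add, t2_space, second_countable_topology}
              \<Rightarrow> 'b::{topological_ab_group_add, t2_space, second_countable_topology} \<Rightarrow> complex"
    and \<mu> :: "'b measure"
    and \<Lambda> :: "'a set"
    and \<Omega> :: "'b set"
    and L :: nat
    and a :: "nat \<Rightarrow> 'a"
  assumes "lca_group TYPE('a)"
    and "is_dual_pairing e"
    and "is_haar_measure \<mu>"
    and "uniform_lattice \<Lambda>"
    and "\<Omega> \<in> sets borel"
    and "0 < emeasure \<mu> \<Omega>" and "emeasure \<mu> \<Omega> < \<infinity>"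
    and "0 < L"
    and "is_frame_L2 \<mu> \<Omega> ({1..L} \<times> \<Lambda>) (\<lambda>(j, l). e (a j + l))"
  shows "\<exists>m::nat. 0 < m \<and> m \<le> L \<and> subtiling_pair \<mu> m \<Omega> (annihilator e \<Lambda>)"
proof -
  interpret haar_measure \<mu> by (rule haar_measure.intro) fact
  obtain A B where "0 < A" "A \<le> B" "frame_bounds \<mu> \<Omega> ({1..L} \<times> \<Lambda>) (\<lambda>(j, l). e (a j + l)) A B"
    using assms(9) unfolding is_frame_L2_iff_frame_bounds by blast
  then interpret frame_setting e \<Lambda> \<mu> \<Omega> L a A B
    using assms(2-5,7) by unfold_locales (simp_all add: sets_haar)
  have "\<exists>m::nat. 0 < m \<and> m \<le> L \<and> esssup \<mu> (F_count \<Omega> \<Gamma>) = of_nat m"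
  proof (rule esssup_eq_of_nat[OF _ F_count_cases AE_F_count_le])
    show "F_count \<Omega> \<Gamma> \<in> borel_measurable \<mu>"
      using F_count_measurable[OF countable_annihilator assms(5)] by (simp add: sets_haar)
  qed (use assms(5,6) zero_in_annihilator F_count_ge_1 in \<open>auto simp: sets_haar\<close>)
  then show ?thesis unfolding subtiling_pair_def by blast
qed

end
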